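(* Let $W_1,\dots,W_n$ be proper subspaces of $\mathbb R^d$ with orthogonal projections $P_1,\dots,P_n$, and suppose there exist scalars $a_1,\dots,a_n\in\mathbb R$ and $A>0$ such that $\sum_{i=1}^n a_i^2P_i=A\cdot I$. Then both $\{W_i\}_{i=1}^n$ and $\{W_i^\perp\}_{i=1}^n$ do norm retrieval on $\mathbb R^d$.
   Context: A family of subspaces $\{V_i\}_{i=1}^n$ of $\mathbb R^d$ with orthogonal projections $\{Q_i\}$ does norm retrieval if whenever $x,y\in\mathbb R^d$ satisfy $\|Q_ix\|=\|Q_iy\|$ for all $i$, then $\|x\|=\|y\|$. *)

theory Defs
  imports "HOL-Analysis.Analysis"
begin

definition orth_proj :: "'a::euclidean_space set \<Rightarrow> 'a \<Rightarrow> 'a" where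
  "orth_proj W x = (THE y. y \<in> W \<and> (\<forall>w\<in>W. orthogonal (x - y) w))"

definition norm_retrieval :: "nat \<Rightarrow> (nat \<Rightarrow> 'a::euclidean_space set) \<Rightarrow> bool" where
  "norm_retrieval n V \<longleftrightarrow>
     (\<forall>x y. (\<forall>i<n. norm (orth_proj (V i) x) = norm (orth_proj (V i) y)) \<longrightarrow> norm x = norm y)"

end

theory Submission
  imports Defs
begin

(* Taking the inner product of the tight frame identity with x gives
   sum_i a_i^2 |P_i x|^2 = A |x|^2, and since |P_i' x|^2 = |x|^2 - |P_i x|^2 for the
   projection P_i' onto the orthogonal complement, also
   sum_i a_i^2 |P_i' x|^2 = (sum_i a_i^2 - A) |x|^2.  Any identity of this shape with a
   nonzero constant determines |x| from the projection norms.  The second constant is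
   nonzero because otherwise every W_i with a_i ~= 0 would be all of R^d, and some
   a_i ~= 0 since A > 0. *)

lemma orth_proj_eqI:
  fixes U :: "'a::euclidean_space set"
  assumes "subspace U" "y \<in> U" "\<forall>w\<in>U. orthogonal (x - y) w"
  shows "orth_proj U x = y"
  unfolding orth_proj_def
proof (rule the_equality)
  show "y \<in> U \<and> (\<forall>w\<in>U. orthogonal (x - y) w)" using assms by auto
next
  fix z assume z: "z \<in> U \<and> (\<forall>w\<in>U. orthogonal (x - z) w)"
  have "y - z \<in> U" using assms(1,2) z by (simp add: subspace_diff)
  then have "orthogonal (x - z) (y - z)" "orthogonal (x - y) (y - z)" using z assms by auto
  then have "(y - z) \<bullet> (y - z) = 0"
    unfolding orthogonal_def by (simp add: inner_diff_left inner_diff_right)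
  then show "z = y" by simp
qed

lemma orth_proj_in_subspace_and_orthogonal:
  fixes U :: "'a::euclidean_space set"
  assumes "subspace U"
  shows "orth_proj U x \<in> U \<and> (\<forall>w\<in>U. orthogonal (x - orth_proj U x) w)"
proof -
  obtain y z where yz: "y \<in> span U" "\<And>w. w \<in> span U \<Longrightarrow> orthogonal z w" "x = y + z"
    by (rule orthogonal_subspace_decomp_exists[of U x]) blast
  then have "x - y = z" by simp
  have span_U: "span U = U" using assms by (simp add: span_eq_iff)
  have y: "y \<in> U" and orth: "\<forall>w\<in>U. orthogonal (x - y) w"
    using yz \<open>x - y = z\<close> unfolding span_U by auto
  then have "orth_proj U x = y" by (rule orth_proj_eqI[OF assms])
  then show ?thesis using y orth by simp
qed

lemma orth_proj_orthogonal_comp: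
  fixes U :: "'a::euclidean_space set"
  assumes "subspace U"
  shows "orth_proj (orthogonal_comp U) x = x - orth_proj U x"
proof (rule orth_proj_eqI)
  have proj: "orth_proj U x \<in> U" "\<And>w. w \<in> U \<Longrightarrow> (x - orth_proj U x) \<bullet> w = 0"
    using orth_proj_in_subspace_and_orthogonal[OF assms, of x] unfolding orthogonal_def by auto
  show "subspace (orthogonal_comp U)" by (rule subspace_orthogonal_comp)
  show "x - orth_proj U x \<in> orthogonal_comp U"
    unfolding orthogonal_comp_def orthogonal_def using proj(2) by (simp add: inner_commute)
  show "\<forall>w\<in>orthogonal_comp U. orthogonal (x - (x - orth_proj U x)) w"
    unfolding orthogonal_comp_def orthogonal_def using proj(1) by simp
qed

lemma orth_proj_orthogonal_comp_eq_0_iff: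
  fixes U :: "'a::euclidean_space set"
  assumes "subspace U"
  shows "orth_proj (orthogonal_comp U) x = 0 \<longleftrightarrow> x \<in> U"
proof
  assume "orth_proj (orthogonal_comp U) x = 0"
  then have "x = orth_proj U x" by (simp add: orth_proj_orthogonal_comp[OF assms])
  then show "x \<in> U" using orth_proj_in_subspace_and_orthogonal[OF assms, of x] by simp
next
  assume "x \<in> U"
  then have "orth_proj U x = x" by (intro orth_proj_eqI[OF assms]) (auto simp: orthogonal_def)
  then show "orth_proj (orthogonal_comp U) x = 0" by (simp add: orth_proj_orthogonal_comp[OF assms])
qed

lemma inner_orth_proj_self:
  fixes U :: "'a::euclidean_space set"
  assumes "subspace U"
  shows "x \<bullet> orth_proj U x = (norm (orth_proj U x))\<^sup>2"
proof -
  have "orthogonal (x - orth_proj U x) (orth_proj U x)"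
    using orth_proj_in_subspace_and_orthogonal[OF assms, of x] by auto
  then have "(x - orth_proj U x) \<bullet> orth_proj U x = 0" by (simp add: orthogonal_def)
  then show ?thesis by (simp add: inner_diff_left power2_norm_eq_inner)
qed

lemma norm_orth_proj_orthogonal_comp_sq:
  fixes U :: "'a::euclidean_space set"
  assumes "subspace U"
  shows "(norm (orth_proj (orthogonal_comp U) x))\<^sup>2 = (norm x)\<^sup>2 - (norm (orth_proj U x))\<^sup>2"
proof -
  have "x \<bullet> orth_proj U x = orth_proj U x \<bullet> orth_proj U x"
    using inner_orth_proj_self[OF assms, of x] by (simp add: power2_norm_eq_inner)
  then show ?thesis
    unfolding orth_proj_orthogonal_comp[OF assms] power2_norm_eq_inner
    by (simp add: inner_diff_left inner_diff_right inner_commute)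
qed

lemma norm_retrieval_if_weighted_norm_identity:
  fixes V :: "nat \<Rightarrow> 'a::euclidean_space set" and c :: "nat \<Rightarrow> real"
  assumes "B \<noteq> 0"
    and "\<And>x. (\<Sum>i<n. c i * (norm (orth_proj (V i) x))\<^sup>2) = B * (norm x)\<^sup>2"
  shows "norm_retrieval n V"
  unfolding norm_retrieval_def
proof (intro allI impI)
  fix x y :: 'a
  assume "\<forall>i<n. norm (orth_proj (V i) x) = norm (orth_proj (V i) y)"
  then have "(\<Sum>i<n. c i * (norm (orth_proj (V i) x))\<^sup>2) = (\<Sum>i<n. c i * (norm (orth_proj (V i) y))\<^sup>2)"
    by (intro sum.cong) simp_all
  then have "B * (norm x)\<^sup>2 = B * (norm y)\<^sup>2" by (simp add: assms(2))
  then have "(norm x)\<^sup>2 = (norm y)\<^sup>2" using assms(1) by simp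
  then show "norm x = norm y" by (simp add: power2_eq_iff_nonneg)
qed

lemma weighted_norm_identity_if_tight:
  fixes W :: "nat \<Rightarrow> 'a::euclidean_space set"
  assumes "\<And>i. i < n \<Longrightarrow> subspace (W i)"
    and "\<And>x. (\<Sum>i<n. c i *\<^sub>R orth_proj (W i) x) = A *\<^sub>R x"
  shows "(\<Sum>i<n. c i * (norm (orth_proj (W i) x))\<^sup>2) = A * (norm x)\<^sup>2"
proof -
  have "(\<Sum>i<n. c i * (norm (orth_proj (W i) x))\<^sup>2) = x \<bullet> (\<Sum>i<n. c i *\<^sub>R orth_proj (W i) x)"
    by (simp add: inner_sum_right inner_orth_proj_self assms(1))
  also have "\<dots> = A * (norm x)\<^sup>2" by (simp add: assms(2) power2_norm_eq_inner)
  finally show ?thesis .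
qed

lemma weighted_norm_identity_orthogonal_comp:
  fixes W :: "nat \<Rightarrow> 'a::euclidean_space set"
  assumes "\<And>i. i < n \<Longrightarrow> subspace (W i)"
    and "(\<Sum>i<n. c i * (norm (orth_proj (W i) x))\<^sup>2) = A * (norm x)\<^sup>2"
  shows "(\<Sum>i<n. c i * (norm (orth_proj (orthogonal_comp (W i)) x))\<^sup>2)
           = (sum c {..<n} - A) * (norm x)\<^sup>2"
proof -
  have "(\<Sum>i<n. c i * (norm (orth_proj (orthogonal_comp (W i)) x))\<^sup>2)
      = (\<Sum>i<n. c i * (norm x)\<^sup>2 - c i * (norm (orth_proj (W i) x))\<^sup>2)"
    by (intro sum.cong) (simp_all add: norm_orth_proj_orthogonal_comp_sq assms(1) right_diff_distrib)
  also have "\<dots> = (sum c {..<n} - A) * (norm x)\<^sup>2"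
    by (simp add: sum_subtractf assms(2) sum_distrib_right left_diff_distrib)
  finally show ?thesis .
qed

lemma subspace_eq_UNIV_if_weighted_orthogonal_comp_vanishes:
  fixes W :: "nat \<Rightarrow> 'a::euclidean_space set"
  assumes "subspace (W i)" "i < n" "c i \<noteq> 0" "\<And>j. j < n \<Longrightarrow> c j \<ge> 0"
    and "\<And>x. (\<Sum>j<n. c j * (norm (orth_proj (orthogonal_comp (W j)) x))\<^sup>2) = 0"
  shows "W i = UNIV"
proof -
  have "x \<in> W i" for x
  proof -
    have "c i * (norm (orth_proj (orthogonal_comp (W i)) x))\<^sup>2 = 0"
      using sum_nonneg_eq_0_iff[THEN iffD1, OF _ _ assms(5)[of x]] assms(2,4) by simp
    then have "orth_proj (orthogonal_comp (W i)) x = 0" using assms(3) by simp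
    then show ?thesis by (simp add: orth_proj_orthogonal_comp_eq_0_iff[OF assms(1)])
  qed
  then show ?thesis by auto
qed

theorem mainTheorem2:
  fixes W :: "nat \<Rightarrow> 'a::euclidean_space set" and n :: nat
    and a :: "nat \<Rightarrow> real" and A :: real
  assumes "\<And>i. i < n \<Longrightarrow> subspace (W i)"
    and "\<And>i. i < n \<Longrightarrow> W i \<noteq> UNIV"
    and "A > 0"
    and "\<And>x. (\<Sum>i<n. (a i)^2 *\<^sub>R orth_proj (W i) x) = A *\<^sub>R x"
  shows "norm_retrieval n W \<and> norm_retrieval n (\<lambda>i. orthogonal_comp (W i))"
proof -
  define S where "S = (\<Sum>i<n. (a i)\<^sup>2)"
  have frame: "(\<Sum>i<n. (a i)\<^sup>2 * (norm (orth_proj (W i) x))\<^sup>2) = A * (norm x)\<^sup>2" for x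
    using weighted_norm_identity_if_tight[OF assms(1,4)] .
  have comp: "(\<Sum>i<n. (a i)\<^sup>2 * (norm (orth_proj (orthogonal_comp (W i)) x))\<^sup>2) = (S - A) * (norm x)\<^sup>2" for x
    unfolding S_def using weighted_norm_identity_orthogonal_comp[OF assms(1) frame] .
  have "S \<noteq> A"
  proof
    assume "S = A"
    then obtain i where i: "i < n" "a i \<noteq> 0"
      using assms(3) unfolding S_def by (metis (no_types, lifting) lessThan_iff power_zero_numeral sum.neutral order_less_irrefl)
    have "W i = UNIV"
      by (rule subspace_eq_UNIV_if_weighted_orthogonal_comp_vanishes[where c = "\<lambda>j. (a j)\<^sup>2"])
        (use assms(1) i comp \<open>S = A\<close> in auto)
    then show False using assms(2) i(1) by simp
  qed
  then show ?thesis
    using norm_retrieval_if_weighted_norm_identity[OF _ frame] assms(3)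
      norm_retrieval_if_weighted_norm_identity[OF _ comp] by simp
qed

end
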